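(* For every integer $n\ge 2$, \[ \gamma_{2t}(K_n\Box K_n)=\begin{cases}3n/2, & n\equiv 0\pmod 4,\\ (3n+1)/2, & n\equiv 1\pmod 2,\\ (3n+2)/2, & n\equiv 2\pmod 4.\end{cases} \]
   Context: For a graph $G=(V,E)$, a set $S\subseteq V$ is a total $2$-dominating set if every vertex of $V$ (including those in $S$) is adjacent to at least $2$ vertices of $S$; $\gamma_{2t}(G)$ is the minimum cardinality of such a set. $G\Box H$ denotes the Cartesian product: vertex set $V(G)\times V(H)$, with $(u_1,v_1)\sim(u_2,v_2)$ iff either $u_1=u_2$ and $v_1\sim v_2$, or $v_1=v_2$ and $u_1\sim u_2$. $K_n$ is the complete graph on $n$ vertices. *)

theory Defs
  imports Main
begin

text \<open>A graph is given by a finite vertex set V and a symmetric, irreflexive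
adjacency relation adj. Only adjacencies between vertices of V matter.\<close>

definition total_k_dominating ::
  "nat \<Rightarrow> 'a set \<Rightarrow> ('a \<Rightarrow> 'a \<Rightarrow> bool) \<Rightarrow> 'a set \<Rightarrow> bool" where
  "total_k_dominating k V adj S \<longleftrightarrow>
     S \<subseteq> V \<and> (\<forall>v\<in>V. card {u \<in> S. adj v u} \<ge> k)"

definition gamma_2t :: "'a set \<Rightarrow> ('a \<Rightarrow> 'a \<Rightarrow> bool) \<Rightarrow> nat" where
  "gamma_2t V adj = (LEAST m. \<exists>S. total_k_dominating 2 V adj S \<and> card S = m)"

definition Kn_vertices :: "nat \<Rightarrow> nat set" where
  "Kn_vertices n = {0..<n}"

definition Kn_adj :: "nat \<Rightarrow> nat \<Rightarrow> bool" where
  "Kn_adj u v \<longleftrightarrow> u \<noteq> v"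

definition cart_vertices :: "'a set \<Rightarrow> 'b set \<Rightarrow> ('a \<times> 'b) set" where
  "cart_vertices V W = V \<times> W"

definition cart_adj ::
  "('a \<Rightarrow> 'a \<Rightarrow> bool) \<Rightarrow> ('b \<Rightarrow> 'b \<Rightarrow> bool) \<Rightarrow> ('a \<times> 'b) \<Rightarrow> ('a \<times> 'b) \<Rightarrow> bool" where
  "cart_adj adjG adjH p q \<longleftrightarrow>
     (fst p = fst q \<and> adjH (snd p) (snd q)) \<or> (snd p = snd q \<and> adjG (fst p) (fst q))"

end

theory Submission
  imports Defs Complex_Main
begin

text \<open>
  View a set S of vertices of K_n \<box> K_n as rooks on an n \<times> n board. A vertex (i, j) sees
  the elements of S in row i and in column j other than itself, so total 2-domination reads
  |row i| + |col j| \<ge> 2 + 2[(i, j) \<in> S].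

  Lower bound: if a row (or column) contains no rook, then every column (row) contains two,
  so |S| \<ge> 2n. Otherwise give each rook p the weight 1/|row p| + 1/|col p|. The weights sum
  to 2n, and since |row p| + |col p| \<ge> 4 each weight is at most 4/3, with equality only if
  |row p| \<in> {1, 3}. Hence 3n \<le> 2|S|, and equality forces every row to hold an odd number of
  rooks, so |S| \<equiv> n (mod 2), which together with 2|S| = 3n gives 4 | n.

  Upper bound: place small dominating sets of sizes 4, 5, 6, 8 on boards of sizes 2, 3, 4, 5
  as blocks along the diagonal; blocks of size 4 contribute 6 rooks each.
\<close>

lemma card_Collect_Un_disjoint:
  assumes "finite A" "finite B" "A \<inter> B = {}"
  shows "card {u \<in> A \<union> B. P u} = card {u \<in> A. P u} + card {u \<in> B. P u}"
proof -
  have "{u \<in> A \<union> B. P u} = {u \<in> A. P u} \<union> {u \<in> B. P u}" by blast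
  then show ?thesis using assms by (simp add: card_Un_disjoint disjoint_iff)
qed

lemma one_le_card_Collect:
  assumes "finite A" "q \<in> A" "P q"
  shows "1 \<le> card {u \<in> A. P u}"
proof -
  have "{u \<in> A. P u} \<noteq> {}" using assms(2,3) by blast
  with assms(1) show ?thesis by (simp add: Suc_le_eq card_gt_0_iff)
qed

lemma card_eq_sum_card_fibres:
  assumes "finite S" "finite B" "f ` S \<subseteq> B"
  shows "card S = (\<Sum>b\<in>B. card {x \<in> S. f x = b})"
  unfolding card_eq_sum by (rule sum.group[symmetric, OF assms])

lemma double_card_le_card_if_fibres_ge_2:
  assumes "finite S" "finite B" "f ` S \<subseteq> B" "\<And>b. b \<in> B \<Longrightarrow> 2 \<le> card {x \<in> S. f x = b}"
  shows "2 * card B \<le> card S"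
proof -
  have "2 * card B = (\<Sum>b\<in>B. 2)" by simp
  also have "\<dots> \<le> (\<Sum>b\<in>B. card {x \<in> S. f x = b})" using assms(4) by (rule sum_mono)
  also have "\<dots> = card S" using card_eq_sum_card_fibres[OF assms(1-3)] by simp
  finally show ?thesis .
qed

lemma sum_inverse_card_fibres:
  assumes "finite S"
  shows "(\<Sum>x\<in>S. 1 / real (card {y \<in> S. f y = f x})) = real (card (f ` S))"
proof -
  have "(\<Sum>x\<in>S. 1 / real (card {y \<in> S. f y = f x})) =
      (\<Sum>b\<in>f ` S. \<Sum>x\<in>{x \<in> S. f x = b}. 1 / real (card {y \<in> S. f y = f x}))"
    by (rule sum.group[symmetric, OF assms finite_imageI[OF assms] subset_refl])
  also have "\<dots> = (\<Sum>b\<in>f ` S. 1)"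
  proof (rule sum.cong[OF refl])
    fix b assume "b \<in> f ` S"
    then have "card {y \<in> S. f y = b} \<noteq> 0" using assms by auto
    then show "(\<Sum>x\<in>{x \<in> S. f x = b}. 1 / real (card {y \<in> S. f y = f x})) = 1"
      by simp
  qed
  finally show ?thesis by simp
qed

lemma inverse_add_inverse_le_four_thirds:
  fixes r c :: nat
  assumes "1 \<le> r" "1 \<le> c" "4 \<le> r + c"
  shows "1 / real r + 1 / real c \<le> 4 / 3"
proof -
  consider "r = 1" "3 \<le> c" | "r = 2" "2 \<le> c" | "3 \<le> r" using assms by linarith
  then show ?thesis
  proof cases
    case 1
    then show ?thesis by (simp add: divide_le_eq)
  next
    case 2
    then have "1 / real c \<le> 1 / 2" by (simp add: field_simps)
    then show ?thesis using \<open>r = 2\<close> by simp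
  next
    case 3
    then have "1 / real r \<le> 1 / 3" by (simp add: divide_le_eq)
    moreover have "1 / real c \<le> 1" using assms(2) by simp
    ultimately show ?thesis by linarith
  qed
qed

lemma inverse_add_inverse_less_four_thirds_if_even:
  fixes r c :: nat
  assumes "even r" "1 \<le> r" "1 \<le> c" "4 \<le> r + c"
  shows "1 / real r + 1 / real c < 4 / 3"
proof -
  consider "r = 2" "2 \<le> c" | "4 \<le> r" using assms by (cases "r = 2") (auto elim!: evenE)
  then show ?thesis
  proof cases
    case 1
    then have "1 / real c \<le> 1 / 2" by (simp add: field_simps)
    then show ?thesis using \<open>r = 2\<close> by simp
  next
    case 2
    then have "1 / real r \<le> 1 / 4" by (simp add: divide_le_eq)
    moreover have "1 / real c \<le> 1" using assms(3) by simp
    ultimately show ?thesis by linarith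
  qed
qed

section \<open>The rook graph\<close>

abbreviation rook_vertices :: "nat \<Rightarrow> (nat \<times> nat) set" where
  "rook_vertices n \<equiv> cart_vertices (Kn_vertices n) (Kn_vertices n)"

abbreviation rook_adj :: "nat \<times> nat \<Rightarrow> nat \<times> nat \<Rightarrow> bool" where
  "rook_adj \<equiv> cart_adj Kn_adj Kn_adj"

lemma rook_vertices_eq: "rook_vertices n = {0..<n} \<times> {0..<n}"
  by (simp add: cart_vertices_def Kn_vertices_def)

lemma rook_adj_iff: "rook_adj (a, b) (c, d) \<longleftrightarrow> a = c \<and> b \<noteq> d \<or> b = d \<and> a \<noteq> c"
  by (auto simp: cart_adj_def Kn_adj_def)

lemma rook_neighbours_eq:
  "{u \<in> S. rook_adj (i, j) u} = ({p \<in> S. fst p = i} - {(i, j)}) \<union> ({p \<in> S. snd p = j} - {(i, j)})"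
  by (auto simp: cart_adj_def Kn_adj_def)

lemma card_rook_neighbours:
  assumes "finite S"
  shows "card {u \<in> S. rook_adj (i, j) u} =
    card ({p \<in> S. fst p = i} - {(i, j)}) + card ({p \<in> S. snd p = j} - {(i, j)})"
  unfolding rook_neighbours_eq using assms by (intro card_Un_disjoint) auto

section \<open>Lower bound\<close>

lemma rook_t2d_subset_finite:
  assumes "total_k_dominating k (rook_vertices n) rook_adj S"
  shows "S \<subseteq> {0..<n} \<times> {0..<n}" and "finite S"
  using assms finite_subset[of S "{0..<n} \<times> {0..<n}"]
  by (auto simp: total_k_dominating_def rook_vertices_eq)

lemma rook_t2d_point_weight:
  assumes "finite S" "p \<in> S" "2 \<le> card {u \<in> S. rook_adj p u}"
  defines "r \<equiv> card {q \<in> S. fst q = fst p}" and "c \<equiv> card {q \<in> S. snd q = snd p}"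
  shows "1 / real r + 1 / real c \<le> 4 / 3" and "even r \<Longrightarrow> 1 / real r + 1 / real c < 4 / 3"
proof -
  have fin: "finite {q \<in> S. fst q = fst p}" "finite {q \<in> S. snd q = snd p}"
    using assms(1) by simp_all
  have "{q \<in> S. fst q = fst p} \<noteq> {}" "{q \<in> S. snd q = snd p} \<noteq> {}"
    using assms(2) by blast+
  with fin have r_c_pos: "1 \<le> r" "1 \<le> c"
    unfolding r_def c_def by (simp_all add: Suc_le_eq card_gt_0_iff)
  have "card {u \<in> S. rook_adj p u} = (r - 1) + (c - 1)"
    using card_rook_neighbours[OF assms(1), of "fst p" "snd p"] assms(2) fin
    unfolding r_def c_def by (simp add: card_Diff_singleton)
  with assms(3) r_c_pos have sum_ge_4: "4 \<le> r + c" by linarith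
  with r_c_pos show "1 / real r + 1 / real c \<le> 4 / 3"
    by (rule inverse_add_inverse_le_four_thirds)
  show "even r \<Longrightarrow> 1 / real r + 1 / real c < 4 / 3"
    by (rule inverse_add_inverse_less_four_thirds_if_even[OF _ r_c_pos sum_ge_4])
qed

lemma rook_t2d_card_lower_if_lines_occupied:
  assumes S: "total_k_dominating 2 (rook_vertices n) rook_adj S"
    and rows: "fst ` S = {0..<n}" and cols: "snd ` S = {0..<n}"
  shows "3 * n \<le> 2 * card S" and "2 * card S = 3 * n \<Longrightarrow> 4 dvd n"
proof -
  define w where "w p = 1 / real (card {q \<in> S. fst q = fst p}) + 1 / real (card {q \<in> S. snd q = snd p})"
    for p
  have fin: "finite S" using rook_t2d_subset_finite[OF S] by simp
  have dom: "2 \<le> card {u \<in> S. rook_adj p u}" if "p \<in> S" for p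
    using S that by (auto simp: total_k_dominating_def)
  have sum_w: "(\<Sum>p\<in>S. w p) = 2 * real n"
    unfolding w_def sum.distrib sum_inverse_card_fibres[OF fin] rows cols by simp
  have sum_w_le: "(\<Sum>p\<in>S. w p) \<le> (\<Sum>p\<in>S. 4 / 3)"
    unfolding w_def using rook_t2d_point_weight(1)[OF fin _ dom] by (intro sum_mono) auto
  then show "3 * n \<le> 2 * card S" using sum_w by simp
  assume tight: "2 * card S = 3 * n"
  have odd_rows: "odd (card {q \<in> S. fst q = i})" if i: "i \<in> {0..<n}" for i
  proof (rule ccontr)
    assume "\<not> odd (card {q \<in> S. fst q = i})"
    moreover obtain p where "p \<in> S" "fst p = i" using i rows by force
    ultimately have "w p < 4 / 3" unfolding w_def using rook_t2d_point_weight(2)[OF fin _ dom] by auto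
    then have "(\<Sum>p\<in>S. w p) < (\<Sum>p\<in>S. 4 / 3)"
      using \<open>p \<in> S\<close> rook_t2d_point_weight(1)[OF fin _ dom] fin
      unfolding w_def by (intro sum_strict_mono_ex1) auto
    with sum_w tight show False by simp
  qed
  have card_S: "card S = (\<Sum>i\<in>{0..<n}. card {q \<in> S. fst q = i})"
    using card_eq_sum_card_fibres[OF fin, of "{0..<n}" fst] rows by simp
  have "even (card S) \<longleftrightarrow> even (card {i \<in> {0..<n}. odd (card {q \<in> S. fst q = i})})"
    unfolding card_S by (rule even_sum_iff) simp
  also have "{i \<in> {0..<n}. odd (card {q \<in> S. fst q = i})} = {0..<n}"
    using odd_rows by auto
  finally have "even (card S) \<longleftrightarrow> even n" by simp
  moreover have "even n" using tight by (metis dvd_triv_left even_mult_iff odd_numeral)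
  then obtain t where t: "n = 2 * t" ..
  ultimately have "even t" using tight by simp
  with t show "4 dvd n" by auto
qed

lemma rook_t2d_card_lower_if_row_empty:
  assumes S: "total_k_dominating 2 (rook_vertices n) rook_adj S" and "i < n" "i \<notin> fst ` S"
  shows "2 * n \<le> card S"
proof -
  note sub = rook_t2d_subset_finite(1)[OF S] and fin = rook_t2d_subset_finite(2)[OF S]
  have empty: "{p \<in> S. fst p = i} = {}" "(i, j) \<notin> S" for j
    using \<open>i \<notin> fst ` S\<close> by force+
  have "2 \<le> card {p \<in> S. snd p = j}" if "j \<in> {0..<n}" for j
  proof -
    have "2 \<le> card {u \<in> S. rook_adj (i, j) u}"
      using S that \<open>i < n\<close> by (auto simp: total_k_dominating_def rook_vertices_eq)
    also have "\<dots> = card {p \<in> S. snd p = j}"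
      using card_rook_neighbours[OF fin, of i j] empty by simp
    finally show ?thesis .
  qed
  moreover have "snd ` S \<subseteq> {0..<n}" using sub by auto
  ultimately show ?thesis using double_card_le_card_if_fibres_ge_2[OF fin, of "{0..<n}" snd] by simp
qed

lemma rook_t2d_card_lower_if_column_empty:
  assumes S: "total_k_dominating 2 (rook_vertices n) rook_adj S" and "j < n" "j \<notin> snd ` S"
  shows "2 * n \<le> card S"
proof -
  note sub = rook_t2d_subset_finite(1)[OF S] and fin = rook_t2d_subset_finite(2)[OF S]
  have empty: "{p \<in> S. snd p = j} = {}" "(i, j) \<notin> S" for i
    using \<open>j \<notin> snd ` S\<close> by force+
  have "2 \<le> card {p \<in> S. fst p = i}" if "i \<in> {0..<n}" for i
  proof -
    have "2 \<le> card {u \<in> S. rook_adj (i, j) u}"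
      using S that \<open>j < n\<close> by (auto simp: total_k_dominating_def rook_vertices_eq)
    also have "\<dots> = card {p \<in> S. fst p = i}"
      using card_rook_neighbours[OF fin, of i j] empty by simp
    finally show ?thesis .
  qed
  moreover have "fst ` S \<subseteq> {0..<n}" using sub by auto
  ultimately show ?thesis using double_card_le_card_if_fibres_ge_2[OF fin, of "{0..<n}" fst] by simp
qed

lemma rook_t2d_card_lower:
  assumes S: "total_k_dominating 2 (rook_vertices n) rook_adj S"
  shows "3 * n \<le> 2 * card S" and "2 * card S = 3 * n \<Longrightarrow> 4 dvd n"
proof -
  have "fst ` S \<subseteq> {0..<n}" "snd ` S \<subseteq> {0..<n}" using rook_t2d_subset_finite(1)[OF S] by auto
  then consider (occupied) "fst ` S = {0..<n}" "snd ` S = {0..<n}" | (empty_line) "2 * n \<le> card S"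
    using rook_t2d_card_lower_if_row_empty[OF S] rook_t2d_card_lower_if_column_empty[OF S]
    by (metis atLeastLessThan_iff subsetI subset_antisym)
  then have "3 * n \<le> 2 * card S \<and> (2 * card S = 3 * n \<longrightarrow> 4 dvd n)"
  proof cases
    case occupied
    then show ?thesis using rook_t2d_card_lower_if_lines_occupied[OF S] by simp
  next
    case empty_line
    then have "3 * n \<le> 2 * card S" by linarith
    moreover have "n = 0" if "2 * card S = 3 * n" using empty_line that by linarith
    ultimately show ?thesis by auto
  qed
  then show "3 * n \<le> 2 * card S" and "2 * card S = 3 * n \<Longrightarrow> 4 dvd n" by simp_all
qed

section \<open>Diagonal blocks\<close>

definition diag_shift :: "nat \<Rightarrow> (nat \<times> nat) set \<Rightarrow> (nat \<times> nat) set" where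
  "diag_shift m S = map_prod ((+) m) ((+) m) ` S"

lemma inj_map_prod_add: "inj (map_prod ((+) m) ((+) (m :: nat)))"
  by (auto simp: inj_def)

lemma card_diag_shift: "card (diag_shift m S) = card S"
  unfolding diag_shift_def by (rule card_image[OF inj_on_subset[OF inj_map_prod_add subset_UNIV]])

lemma fst_image_diag_shift: "fst ` diag_shift m S = (+) m ` fst ` S"
  and snd_image_diag_shift: "snd ` diag_shift m S = (+) m ` snd ` S"
  by (simp_all add: diag_shift_def image_image)

lemma card_rook_neighbours_diag_shift:
  "card {u \<in> diag_shift m S. rook_adj (m + i, m + j) u} = card {u \<in> S. rook_adj (i, j) u}"
proof -
  have "{u \<in> diag_shift m S. rook_adj (m + i, m + j) u} =
      map_prod ((+) m) ((+) m) ` {u \<in> S. rook_adj (i, j) u}"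
    unfolding diag_shift_def by (auto simp: rook_adj_iff)
  then show ?thesis
    using card_image[OF inj_on_subset[OF inj_map_prod_add subset_UNIV]] by simp
qed

text \<open>Occupying every row and every column is what lets blocks be combined diagonally: a vertex
  whose row lies in one block and whose column lies in another sees a rook of each.\<close>

definition t2d_block :: "nat \<Rightarrow> (nat \<times> nat) set \<Rightarrow> bool" where
  "t2d_block n S \<longleftrightarrow> total_k_dominating 2 (rook_vertices n) rook_adj S \<and>
     fst ` S = {0..<n} \<and> snd ` S = {0..<n}"

lemma t2d_block_rowE:
  assumes "t2d_block n S" "i < n"
  obtains j where "(i, j) \<in> S" "j < n"
proof -
  have "i \<in> fst ` S" and sub: "S \<subseteq> {0..<n} \<times> {0..<n}"
    using assms rook_t2d_subset_finite(1)[of 2 n S] by (simp_all add: t2d_block_def)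
  then obtain p where "p \<in> S" "i = fst p" by blast
  with sub show thesis using that[of "snd p"] by auto
qed

lemma t2d_block_colE:
  assumes "t2d_block n S" "j < n"
  obtains i where "(i, j) \<in> S" "i < n"
proof -
  have "j \<in> snd ` S" and sub: "S \<subseteq> {0..<n} \<times> {0..<n}"
    using assms rook_t2d_subset_finite(1)[of 2 n S] by (simp_all add: t2d_block_def)
  then obtain p where "p \<in> S" "j = snd p" by blast
  with sub show thesis using that[of "fst p"] by auto
qed

lemma rook_t2d_Un_diag_shift:
  assumes S1: "t2d_block n1 S1" and S2: "t2d_block n2 S2"
    and ij: "i < n1 + n2" "j < n1 + n2"
  shows "2 \<le> card {u \<in> S1 \<union> diag_shift n1 S2. rook_adj (i, j) u}"
proof -
  let ?S2' = "diag_shift n1 S2"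
  have dom1: "total_k_dominating 2 (rook_vertices n1) rook_adj S1"
    and dom2: "total_k_dominating 2 (rook_vertices n2) rook_adj S2"
    using S1 S2 by (simp_all add: t2d_block_def)
  have fin: "finite S1" "finite ?S2'"
    using rook_t2d_subset_finite(2)[OF dom1] rook_t2d_subset_finite(2)[OF dom2] by (simp_all add: diag_shift_def)
  have "S1 \<inter> ?S2' = {}"
    using rook_t2d_subset_finite(1)[OF dom1] by (auto simp: diag_shift_def)
  note count = card_Collect_Un_disjoint[OF fin this, of "rook_adj (i, j)"]
  consider "i < n1" "j < n1" | "n1 \<le> i" "n1 \<le> j" | "i < n1" "n1 \<le> j" | "n1 \<le> i" "j < n1"
    by linarith
  then show ?thesis
  proof cases
    case 1
    then have "2 \<le> card {u \<in> S1. rook_adj (i, j) u}"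
      using dom1 by (simp add: total_k_dominating_def rook_vertices_eq)
    then show ?thesis unfolding count by linarith
  next
    case 2
    define i' j' where "i' = i - n1" and "j' = j - n1"
    with 2 ij have ij': "i = n1 + i'" "j = n1 + j'" "i' < n2" "j' < n2" by simp_all
    then have "2 \<le> card {u \<in> S2. rook_adj (i', j') u}"
      using dom2 by (simp add: total_k_dominating_def rook_vertices_eq)
    moreover have "card {u \<in> ?S2'. rook_adj (i, j) u} = card {u \<in> S2. rook_adj (i', j') u}"
      unfolding ij'(1,2) by (rule card_rook_neighbours_diag_shift)
    ultimately show ?thesis unfolding count by linarith
  next
    case 3
    obtain y where y: "(i, y) \<in> S1" "y < n1" using S1 \<open>i < n1\<close> by (rule t2d_block_rowE)
    have "j - n1 < n2" using ij(2) 3 by linarith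
    with S2 obtain x where "(x, j - n1) \<in> S2" by (rule t2d_block_colE)
    from map_prod_imageI[OF this, of "(+) n1" "(+) n1"] \<open>n1 \<le> j\<close>
    have x: "(n1 + x, j) \<in> ?S2'" by (simp add: diag_shift_def)
    have "1 \<le> card {u \<in> S1. rook_adj (i, j) u}"
      by (rule one_le_card_Collect[OF fin(1) y(1)]) (use y(2) 3 in \<open>simp add: rook_adj_iff\<close>)
    moreover have "1 \<le> card {u \<in> ?S2'. rook_adj (i, j) u}"
      by (rule one_le_card_Collect[OF fin(2) x]) (use 3 in \<open>simp add: rook_adj_iff\<close>)
    ultimately show ?thesis unfolding count by linarith
  next
    case 4
    obtain x where x: "(x, j) \<in> S1" "x < n1" using S1 \<open>j < n1\<close> by (rule t2d_block_colE)
    have "i - n1 < n2" using ij(1) 4 by linarith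
    with S2 obtain y where "(i - n1, y) \<in> S2" by (rule t2d_block_rowE)
    from map_prod_imageI[OF this, of "(+) n1" "(+) n1"] \<open>n1 \<le> i\<close>
    have y: "(i, n1 + y) \<in> ?S2'" by (simp add: diag_shift_def)
    have "1 \<le> card {u \<in> S1. rook_adj (i, j) u}"
      by (rule one_le_card_Collect[OF fin(1) x(1)]) (use x(2) 4 in \<open>simp add: rook_adj_iff\<close>)
    moreover have "1 \<le> card {u \<in> ?S2'. rook_adj (i, j) u}"
      by (rule one_le_card_Collect[OF fin(2) y]) (use 4 in \<open>simp add: rook_adj_iff\<close>)
    ultimately show ?thesis unfolding count by linarith
  qed
qed

lemma t2d_block_Un_diag_shift:
  assumes S1: "t2d_block n1 S1" and S2: "t2d_block n2 S2"
  shows "t2d_block (n1 + n2) (S1 \<union> diag_shift n1 S2)"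
    and "card (S1 \<union> diag_shift n1 S2) = card S1 + card S2"
proof -
  have dom1: "total_k_dominating 2 (rook_vertices n1) rook_adj S1"
    and dom2: "total_k_dominating 2 (rook_vertices n2) rook_adj S2"
    and lines1: "fst ` S1 = {0..<n1}" "snd ` S1 = {0..<n1}"
    and lines2: "fst ` S2 = {0..<n2}" "snd ` S2 = {0..<n2}"
    using S1 S2 by (simp_all add: t2d_block_def)
  have lines: "fst ` (S1 \<union> diag_shift n1 S2) = {0..<n1 + n2}"
    "snd ` (S1 \<union> diag_shift n1 S2) = {0..<n1 + n2}"
    unfolding image_Un fst_image_diag_shift snd_image_diag_shift lines1 lines2
    by (simp_all add: add.commute ivl_disj_un_two(3))
  have "S1 \<subseteq> {0..<n1} \<times> {0..<n1}" using rook_t2d_subset_finite(1)[OF dom1] .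
  then have "S1 \<inter> diag_shift n1 S2 = {}" by (auto simp: diag_shift_def)
  moreover have "finite S1" "finite (diag_shift n1 S2)"
    using rook_t2d_subset_finite(2)[OF dom1] rook_t2d_subset_finite(2)[OF dom2] by (simp_all add: diag_shift_def)
  ultimately show "card (S1 \<union> diag_shift n1 S2) = card S1 + card S2"
    by (simp add: card_Un_disjoint card_diag_shift)
  have "S1 \<union> diag_shift n1 S2 \<subseteq> {0..<n1 + n2} \<times> {0..<n1 + n2}"
    using subset_fst_snd[of "S1 \<union> diag_shift n1 S2"] unfolding lines .
  with lines show "t2d_block (n1 + n2) (S1 \<union> diag_shift n1 S2)"
    using rook_t2d_Un_diag_shift[OF S1 S2]
    by (simp add: t2d_block_def total_k_dominating_def rook_vertices_eq)
qed

lemma exists_t2d_block_0: "\<exists>S. t2d_block 0 S \<and> card S = 0"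
  by (rule exI[of _ "{}"]) (simp add: t2d_block_def total_k_dominating_def rook_vertices_eq)

lemma exists_t2d_block_2: "\<exists>S. t2d_block 2 S \<and> card S = 4"
proof
  let ?S = "{(0, 0), (0, 1), (1, 0), (1, 1)} :: (nat \<times> nat) set"
  show "t2d_block 2 ?S \<and> card ?S = 4"
    unfolding t2d_block_def by code_simp
qed

lemma exists_t2d_block_3: "\<exists>S. t2d_block 3 S \<and> card S = 5"
proof
  let ?S = "{(0, 0), (0, 1), (0, 2), (1, 0), (2, 0)} :: (nat \<times> nat) set"
  show "t2d_block 3 ?S \<and> card ?S = 5"
    unfolding t2d_block_def by code_simp
qed

lemma exists_t2d_block_4: "\<exists>S. t2d_block 4 S \<and> card S = 6"
proof
  let ?S = "{(0, 0), (0, 1), (0, 2), (1, 3), (2, 3), (3, 3)} :: (nat \<times> nat) set"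
  show "t2d_block 4 ?S \<and> card ?S = 6"
    unfolding t2d_block_def by code_simp
qed

lemma exists_t2d_block_5: "\<exists>S. t2d_block 5 S \<and> card S = 8"
proof
  let ?S = "{(0, 0), (0, 1), (0, 2), (0, 3), (1, 4), (2, 4), (3, 4), (4, 4)} :: (nat \<times> nat) set"
  show "t2d_block 5 ?S \<and> card ?S = 8"
    unfolding t2d_block_def by code_simp
qed

lemma exists_t2d_block_add_4:
  assumes "\<exists>B. t2d_block m B \<and> card B = c"
  shows "\<exists>S. t2d_block (4 * k + m) S \<and> card S = 6 * k + c"
proof (induction k)
  case 0
  show ?case using assms by simp
next
  case (Suc k)
  then obtain S where S: "t2d_block (4 * k + m) S" "card S = 6 * k + c" by blast
  obtain B where B: "t2d_block 4 B" "card B = 6" using exists_t2d_block_4 by blast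
  have "4 * Suc k + m = 4 + (4 * k + m)" by simp
  then have "t2d_block (4 * Suc k + m) (B \<union> diag_shift 4 S)"
    using t2d_block_Un_diag_shift(1)[OF B(1) S(1)] by (simp only:)
  moreover have "card (B \<union> diag_shift 4 S) = 6 * Suc k + c"
    using t2d_block_Un_diag_shift(2)[OF B(1) S(1)] B(2) S(2) by simp
  ultimately show ?case by blast
qed

definition rook_t2d_formula :: "nat \<Rightarrow> nat" where
  "rook_t2d_formula n =
    (if n mod 4 = 0 then 3 * n div 2 else if odd n then (3 * n + 1) div 2 else (3 * n + 2) div 2)"

lemma rook_t2d_formula_4k: "rook_t2d_formula (4 * k) = 6 * k"
  and rook_t2d_formula_4k1: "rook_t2d_formula (4 * k + 1) = 6 * k + 2"
  and rook_t2d_formula_4k3: "rook_t2d_formula (4 * k + 3) = 6 * k + 5"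
  by (simp_all add: rook_t2d_formula_def)

lemma rook_t2d_formula_4k2: "rook_t2d_formula (4 * k + 2) = 6 * k + 4"
proof -
  have "(4 * k + 2) mod 4 = 2" using mod_mult_self4[of 4 k 2] by simp
  then show ?thesis by (simp add: rook_t2d_formula_def)
qed

lemma mod_4_cases:
  fixes n :: nat
  obtains k where "n = 4 * k" | k where "n = 4 * k + 1" | k where "n = 4 * k + 2"
    | k where "n = 4 * k + 3"
proof -
  have "n = 4 * (n div 4) + n mod 4" "n mod 4 < 4" by simp_all
  then consider "n = 4 * (n div 4)" | "n = 4 * (n div 4) + 1" | "n = 4 * (n div 4) + 2"
    | "n = 4 * (n div 4) + 3" by linarith
  then show ?thesis using that by metis
qed

lemma rook_t2d_formula_le:
  assumes "3 * n \<le> 2 * m" "2 * m = 3 * n \<Longrightarrow> 4 dvd n"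
  shows "rook_t2d_formula n \<le> m"
proof (cases n rule: mod_4_cases)
  case (1 k)
  with assms(1) show ?thesis unfolding 1 rook_t2d_formula_4k by linarith
next
  case (2 k)
  with assms(1) show ?thesis unfolding 2 rook_t2d_formula_4k1 by presburger
next
  case (3 k)
  with assms(2) have "2 * m \<noteq> 3 * n" by presburger
  with assms(1) show ?thesis unfolding 3 rook_t2d_formula_4k2 by presburger
next
  case (4 k)
  with assms(1) show ?thesis unfolding 4 rook_t2d_formula_4k3 by presburger
qed

lemma exists_t2d_block:
  assumes "2 \<le> n"
  shows "\<exists>S. t2d_block n S \<and> card S = rook_t2d_formula n"
proof (cases n rule: mod_4_cases)
  case (1 k)
  then have "rook_t2d_formula n = 6 * k" using rook_t2d_formula_4k[of k] by simp
  with 1 show ?thesis using exists_t2d_block_add_4[OF exists_t2d_block_0, of k] by simp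
next
  case (2 k)
  with assms obtain j where "k = Suc j" by (cases k) auto
  with 2 have "n = 4 * j + 5" "rook_t2d_formula n = 6 * j + 8"
    using rook_t2d_formula_4k1[of k] by simp_all
  then show ?thesis using exists_t2d_block_add_4[OF exists_t2d_block_5, of j] by simp
next
  case (3 k)
  then have "rook_t2d_formula n = 6 * k + 4" using rook_t2d_formula_4k2[of k] by simp
  with 3 show ?thesis using exists_t2d_block_add_4[OF exists_t2d_block_2, of k] by simp
next
  case (4 k)
  then have "rook_t2d_formula n = 6 * k + 5" using rook_t2d_formula_4k3[of k] by simp
  with 4 show ?thesis using exists_t2d_block_add_4[OF exists_t2d_block_3, of k] by simp
qed

theorem theorem9:
  fixes n :: nat
  assumes "n \<ge> 2"
  shows "gamma_2t (cart_vertices (Kn_vertices n) (Kn_vertices n)) (cart_adj Kn_adj Kn_adj) =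
    (if n mod 4 = 0 then 3 * n div 2
     else if odd n then (3 * n + 1) div 2
     else (3 * n + 2) div 2)"
  unfolding gamma_2t_def rook_t2d_formula_def[symmetric]
proof (rule Least_equality)
  obtain S where "t2d_block n S" "card S = rook_t2d_formula n"
    using exists_t2d_block[OF assms] by blast
  then show "\<exists>S. total_k_dominating 2 (rook_vertices n) rook_adj S \<and> card S = rook_t2d_formula n"
    unfolding t2d_block_def by blast
next
  fix m
  assume "\<exists>S. total_k_dominating 2 (rook_vertices n) rook_adj S \<and> card S = m"
  then obtain S where S: "total_k_dominating 2 (rook_vertices n) rook_adj S" "card S = m" by blast
  show "rook_t2d_formula n \<le> m"
    using rook_t2d_formula_le rook_t2d_card_lower[OF S(1)] S(2) by blast
qed

end
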